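(* For $n\ge 2$, the number of shallow $132$-avoiding centrosymmetric permutations in $S_n$ equals $\lceil (n+1)/2\rceil$.
   Context: For $\pi\in S_n$: $D(\pi)=\sum_{i}|\pi_i-i|$, $I(\pi)$ is the number of inversions, $T(\pi)=n-\mathrm{cyc}(\pi)$ with $\mathrm{cyc}$ the number of cycles in the disjoint cycle decomposition; $\pi$ is shallow if $I(\pi)+T(\pi)=D(\pi)$. A permutation avoids a pattern $\sigma$ if it has no subsequence order-isomorphic to $\sigma$. The reverse-complement $\pi^{rc}$ is defined by $\pi^{rc}_{n+1-i}=n+1-\pi_i$; $\pi$ is centrosymmetric if $\pi=\pi^{rc}$. *)

theory Defs
  imports Complex_Main "HOL-Combinatorics.Permutations"
begin

definition perms :: "nat \<Rightarrow> (nat \<Rightarrow> nat) set" where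
  "perms n = {p. p permutes {1..n}}"

definition displacement :: "nat \<Rightarrow> (nat \<Rightarrow> nat) \<Rightarrow> int" where
  "displacement n p = (\<Sum>i\<in>{1..n}. \<bar>int (p i) - int i\<bar>)"

definition inversions :: "nat \<Rightarrow> (nat \<Rightarrow> nat) \<Rightarrow> nat" where
  "inversions n p = card {(i, j). i \<in> {1..n} \<and> j \<in> {1..n} \<and> i < j \<and> p i > p j}"

definition cycle_at :: "(nat \<Rightarrow> nat) \<Rightarrow> nat \<Rightarrow> nat set" where
  "cycle_at p i = {(p ^^ k) i | k. True}"

definition num_cycles :: "nat \<Rightarrow> (nat \<Rightarrow> nat) \<Rightarrow> nat" where
  "num_cycles n p = card (cycle_at p ` {1..n})"

definition reflection_length :: "nat \<Rightarrow> (nat \<Rightarrow> nat) \<Rightarrow> nat" where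
  "reflection_length n p = n - num_cycles n p"

definition shallow :: "nat \<Rightarrow> (nat \<Rightarrow> nat) \<Rightarrow> bool" where
  "shallow n p \<longleftrightarrow>
     int (inversions n p) + int (reflection_length n p) = displacement n p"

definition avoids132 :: "nat \<Rightarrow> (nat \<Rightarrow> nat) \<Rightarrow> bool" where
  "avoids132 n p \<longleftrightarrow>
     \<not> (\<exists>i j k. 1 \<le> i \<and> i < j \<and> j < k \<and> k \<le> n \<and> p i < p k \<and> p k < p j)"

definition centrosymmetric :: "nat \<Rightarrow> (nat \<Rightarrow> nat) \<Rightarrow> bool" where
  "centrosymmetric n p \<longleftrightarrow> (\<forall>i\<in>{1..n}. p (n + 1 - i) = n + 1 - p i)"

end

theory Submission
  imports Defs "HOL-Combinatorics.Cycles"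
begin

text \<open>A centrosymmetric 132-avoiding permutation p of [n] is either the identity, or it begins with
  an increasing run of length c = n + 1 - p(1) ending in n; centrosymmetry mirrors this run onto
  an increasing run 1, ..., c at the end, and what remains in the middle is, after shifting, a
  centrosymmetric 132-avoiding permutation s of [n - 2c].  Passing from s to p adds 2c(n - c) to D,
  c(n - c) + (n - 2c)c to I and c to T, so the defect D - I - T grows by c^2 - c.  By induction
  the defect is nonnegative, and it vanishes exactly when every layer has c = 1, i.e. for the
  n div 2 + 1 involutions exchanging i and n + 1 - i for the k outermost pairs, k \<le> n div 2.\<close>

lemma permutes_interval_bounds:
  assumes "p permutes {1..n}" "1 \<le> i" "i \<le> n"
  shows "1 \<le> p i \<and> p i \<le> n"
  using permutes_in_image[OF assms(1)] assms(2,3) by auto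

lemma centrosymmetric_avoids132_avoids213:
  assumes pp: "p permutes {1..n}" and ce: "centrosymmetric n p" and av: "avoids132 n p"
    and ijk: "1 \<le> i" "i < j" "j < k" "k \<le> n"
  shows "\<not> (p j < p i \<and> p i < p k)"
proof
  assume pattern: "p j < p i \<and> p i < p k"
  have "p (n + 1 - k) = n + 1 - p k" "p (n + 1 - j) = n + 1 - p j" "p (n + 1 - i) = n + 1 - p i"
    using ce ijk unfolding centrosymmetric_def by auto
  moreover have "p k \<le> n" using permutes_interval_bounds[OF pp, of k] ijk by auto
  ultimately have "1 \<le> n + 1 - k \<and> n + 1 - k < n + 1 - j \<and> n + 1 - j < n + 1 - i \<and>
      n + 1 - i \<le> n \<and> p (n + 1 - k) < p (n + 1 - i) \<and> p (n + 1 - i) < p (n + 1 - j)"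
    using ijk pattern by auto
  then show False using av unfolding avoids132_def by blast
qed

lemma centrosymmetric_avoids132_initial_run:
  assumes pp: "p permutes {1..n}" and ce: "centrosymmetric n p" and av: "avoids132 n p"
  shows "1 \<le> i \<Longrightarrow> i \<le> n + 1 - p 1 \<Longrightarrow> p i = p 1 + i - 1"
proof (induction i rule: less_induct)
  case (less i)
  note inj = inj_eq[OF permutes_inj[OF pp]]
  show ?case
  proof (cases "i = 1")
    case False
    then have i: "2 \<le> i" "i \<le> n + 1 - p 1" using less.prems by auto
    have earlier: "p t = p 1 + t - 1" if "1 \<le> t" "t < i" for t
      using less.IH[OF that(2,1)] that i by simp
    have "p 1 + i - 1 \<in> p ` {1..n}"
      using i permutes_interval_bounds[OF pp, of 1] permutes_image[OF pp] by auto
    then obtain j where j: "1 \<le> j" "j \<le> n" "p j = p 1 + i - 1" by auto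
    txt \<open>Otherwise p i lies below p 1 (a 213 at positions 1, i, j), strictly between p 1 and
      p j (values already taken before position i), or above p j (a 132 at positions 1, i, j).\<close>
    have "j = i"
    proof (rule ccontr)
      assume "j \<noteq> i"
      moreover have "\<not> j < i" using earlier[of j] j i by auto
      ultimately have ij: "i < j" by simp
      have "p i \<noteq> p 1" "p i \<noteq> p j" using i ij by (simp_all add: inj)
      moreover have "\<not> (p 1 < p i \<and> p i < p j)"
      proof
        assume between: "p 1 < p i \<and> p i < p j"
        then have "p (p i - p 1 + 1) = p i" using earlier[of "p i - p 1 + 1"] j by auto
        then have "p i - p 1 + 1 = i" by (simp add: inj)
        then show False using between j by linarith
      qed
      moreover have "\<not> p i < p 1"
        using centrosymmetric_avoids132_avoids213[OF pp ce av, of 1 i j] i ij j by auto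
      moreover have "\<not> p j < p i"
      proof
        assume "p j < p i"
        then have "1 \<le> (1::nat) \<and> 1 < i \<and> i < j \<and> j \<le> n \<and> p 1 < p j \<and> p j < p i"
          using i ij j by auto
        then show False using av unfolding avoids132_def by blast
      qed
      ultimately show False using i j by linarith
    qed
    then show ?thesis using j by simp
  qed simp
qed

lemma centrosymmetric_avoids132_fix_first:
  assumes pp: "p permutes {1..n}" and ce: "centrosymmetric n p" and av: "avoids132 n p"
    and "p 1 = 1"
  shows "p = id"
proof
  fix i
  show "p i = id i"
    using centrosymmetric_avoids132_initial_run[OF pp ce av, of i] permutes_not_in[OF pp, of i]
      \<open>p 1 = 1\<close>
    by (cases "i \<in> {1..n}") auto
qed

lemma centrosymmetric_avoids132_frame:
  assumes pp: "p permutes {1..n}" and ce: "centrosymmetric n p" and av: "avoids132 n p"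
    and moved: "1 < p 1"
  obtains m c where "1 \<le> c" "n = m + 2 * c"
    "\<And>i. 1 \<le> i \<Longrightarrow> i \<le> c \<Longrightarrow> p i = i + m + c"
    "\<And>i. m + c < i \<Longrightarrow> i \<le> m + 2 * c \<Longrightarrow> p i = i - (m + c)"
    "\<And>i. c < i \<Longrightarrow> i \<le> m + c \<Longrightarrow> c < p i \<and> p i \<le> m + c"
proof -
  note inj = inj_eq[OF permutes_inj[OF pp]]
  have "1 \<in> {1..n}" using moved permutes_not_in[OF pp, of 1] by auto
  then have v: "p 1 \<le> n" using permutes_interval_bounds[OF pp, of 1] by auto
  define c where "c = n + 1 - p 1"
  have c: "1 \<le> c" "c < n" using v moved unfolding c_def by auto
  have first: "p i = p 1 + i - 1" if "1 \<le> i" "i \<le> c" for i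
    using centrosymmetric_avoids132_initial_run[OF pp ce av that(1)] that unfolding c_def by simp
  have mirror: "p (n + 1 - i) = n + 1 - p i" if "1 \<le> i" "i \<le> n" for i
    using ce that unfolding centrosymmetric_def by auto
  txt \<open>If the initial run were longer than n div 2, its entry c (at position c + 1 - p 1) would
    be mirrored to the value p 1 at a second position.\<close>
  have frame_fits: "2 * c \<le> n"
  proof (rule ccontr)
    assume "\<not> 2 * c \<le> n"
    then have i: "1 \<le> c + 1 - p 1" "c + 1 - p 1 \<le> c" using moved unfolding c_def by auto
    have "p (n + 1 - (c + 1 - p 1)) = n + 1 - c"
      using mirror[of "c + 1 - p 1"] first[OF i] i c by simp
    also have "\<dots> = p 1" using v unfolding c_def by simp
    finally have "n + 1 - (c + 1 - p 1) = 1" by (simp add: inj)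
    then show False using i c by simp
  qed
  define m where "m = n - 2 * c"
  have n: "n = m + 2 * c" using frame_fits unfolding m_def by simp
  have v': "p 1 = m + c + 1" using v n unfolding c_def by simp
  have first': "p i = i + m + c" if "1 \<le> i" "i \<le> c" for i
    using first[OF that] v' that by simp
  have last: "p i = i - (m + c)" if "m + c < i" "i \<le> m + 2 * c" for i
    using mirror[of "n + 1 - i"] first'[of "n + 1 - i"] that n by simp
  have middle: "c < p i \<and> p i \<le> m + c" if "c < i" "i \<le> m + c" for i
  proof -
    have pi: "1 \<le> p i" "p i \<le> n" using permutes_interval_bounds[OF pp, of i] that n by auto
    have "\<not> p i \<le> c"
    proof
      assume "p i \<le> c"
      then have "p (p i + (m + c)) = p i" using last[of "p i + (m + c)"] pi by simp
      then show False using that pi by (simp add: inj)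
    qed
    moreover have "\<not> m + c < p i"
    proof
      assume "m + c < p i"
      then have "p (p i - (m + c)) = p i" using first'[of "p i - (m + c)"] pi n by simp
      then have "p i - (m + c) = i" by (simp add: inj)
      then show False using that \<open>m + c < p i\<close> pi n by linarith
    qed
    ultimately show ?thesis by simp
  qed
  show thesis using that[OF c(1) n first' last middle] .
qed

definition framed :: "nat \<Rightarrow> nat \<Rightarrow> (nat \<Rightarrow> nat) \<Rightarrow> nat \<Rightarrow> nat" where
  "framed m c s i =
     (if 1 \<le> i \<and> i \<le> c then i + m + c
      else if c < i \<and> i \<le> m + c then s (i - c) + c
      else if m + c < i \<and> i \<le> m + 2 * c then i - (m + c)
      else i)"

lemma framed_apply_first: "1 \<le> i \<Longrightarrow> i \<le> c \<Longrightarrow> framed m c s i = i + m + c"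
  and framed_apply_middle: "c < i \<Longrightarrow> i \<le> m + c \<Longrightarrow> framed m c s i = s (i - c) + c"
  and framed_apply_last: "m + c < i \<Longrightarrow> i \<le> m + 2 * c \<Longrightarrow> framed m c s i = i - (m + c)"
  by (simp_all add: framed_def)

definition middle :: "nat \<Rightarrow> nat \<Rightarrow> (nat \<Rightarrow> nat) \<Rightarrow> nat \<Rightarrow> nat" where
  "middle m c p j = (if 1 \<le> j \<and> j \<le> m then p (j + c) - c else j)"

lemma middle_permutes:
  assumes pp: "p permutes {1..m + 2 * c}"
    and mid: "\<And>i. c < i \<Longrightarrow> i \<le> m + c \<Longrightarrow> c < p i \<and> p i \<le> m + c"
  shows "middle m c p permutes {1..m}"
proof (rule inj_imp_permutes)
  show "inj_on (middle m c p) {1..m}"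
  proof (rule inj_onI)
    fix x y assume "x \<in> {1..m}" "y \<in> {1..m}" "middle m c p x = middle m c p y"
    then have "p (x + c) = p (y + c)" using mid[of "x + c"] mid[of "y + c"] unfolding middle_def by auto
    then show "x = y" using permutes_inj[OF pp] by (auto dest: injD)
  qed
  show "middle m c p j \<in> {1..m}" if "j \<in> {1..m}" for j
    using mid[of "j + c"] that unfolding middle_def by auto
qed (auto simp: middle_def)

lemma middle_avoids132:
  assumes av: "avoids132 (m + 2 * c) p"
    and mid: "\<And>i. c < i \<Longrightarrow> i \<le> m + c \<Longrightarrow> c < p i \<and> p i \<le> m + c"
  shows "avoids132 m (middle m c p)"
  unfolding avoids132_def
proof clarify
  fix i j k assume ijk: "1 \<le> i" "i < j" "j < k" "k \<le> m"
    and pattern: "middle m c p i < middle m c p k" "middle m c p k < middle m c p j"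
  have "c < p (i + c)" "c < p (j + c)" "c < p (k + c)" using mid ijk by auto
  then have "1 \<le> i + c \<and> i + c < j + c \<and> j + c < k + c \<and> k + c \<le> m + 2 * c \<and>
      p (i + c) < p (k + c) \<and> p (k + c) < p (j + c)"
    using ijk pattern unfolding middle_def by auto
  then show False using av unfolding avoids132_def by blast
qed

lemma middle_centrosymmetric:
  assumes ce: "centrosymmetric (m + 2 * c) p"
    and mid: "\<And>i. c < i \<Longrightarrow> i \<le> m + c \<Longrightarrow> c < p i \<and> p i \<le> m + c"
  shows "centrosymmetric m (middle m c p)"
  unfolding centrosymmetric_def
proof
  fix i assume i: "i \<in> {1..m}"
  have "i + c \<in> {1..m + 2 * c}" using i by auto
  then have "p (m + 2 * c + 1 - (i + c)) = m + 2 * c + 1 - p (i + c)"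
    using ce unfolding centrosymmetric_def by blast
  moreover have "m + 2 * c + 1 - (i + c) = (m + 1 - i) + c" using i by auto
  ultimately show "middle m c p (m + 1 - i) = m + 1 - middle m c p i"
    using mid[of "i + c"] i unfolding middle_def by auto
qed

lemma framed_middle_eq:
  assumes pp: "p permutes {1..m + 2 * c}"
    and first: "\<And>i. 1 \<le> i \<Longrightarrow> i \<le> c \<Longrightarrow> p i = i + m + c"
    and last: "\<And>i. m + c < i \<Longrightarrow> i \<le> m + 2 * c \<Longrightarrow> p i = i - (m + c)"
    and mid: "\<And>i. c < i \<Longrightarrow> i \<le> m + c \<Longrightarrow> c < p i \<and> p i \<le> m + c"
  shows "p = framed m c (middle m c p)"
proof
  fix i
  show "p i = framed m c (middle m c p) i"
    using first[of i] last[of i] mid[of i] permutes_not_in[OF pp, of i]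
    unfolding framed_def middle_def by auto
qed

lemma centrosymmetric_avoids132_cases:
  assumes pp: "p permutes {1..n}" and ce: "centrosymmetric n p" and av: "avoids132 n p"
  obtains "p = id"
  | m c s where "1 \<le> c" "n = m + 2 * c" "s permutes {1..m}" "avoids132 m s"
      "centrosymmetric m s" "p = framed m c s"
proof (cases "p 1 = 1")
  case True
  then show thesis using that(1) centrosymmetric_avoids132_fix_first[OF pp ce av] by blast
next
  case False
  then have "1 < p 1"
    using permutes_not_in[OF pp, of 1] permutes_interval_bounds[OF pp, of 1] by fastforce
  then obtain m c where c: "1 \<le> c" and n: "n = m + 2 * c"
    and first: "\<And>i. 1 \<le> i \<Longrightarrow> i \<le> c \<Longrightarrow> p i = i + m + c"
    and last: "\<And>i. m + c < i \<Longrightarrow> i \<le> m + 2 * c \<Longrightarrow> p i = i - (m + c)"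
    and mid: "\<And>i. c < i \<Longrightarrow> i \<le> m + c \<Longrightarrow> c < p i \<and> p i \<le> m + c"
    using centrosymmetric_avoids132_frame[OF pp ce av] by blast
  show thesis
    using that(2)[OF c n] pp ce av mid framed_middle_eq[OF _ first last mid]
      middle_permutes middle_avoids132 middle_centrosymmetric
    unfolding n by blast
qed

lemma sum_frame_split:
  fixes f :: "nat \<Rightarrow> 'a::comm_monoid_add"
  shows "(\<Sum>i = 1..m + 2 * c. f i) = (\<Sum>i = 1..c. f i + f (i + m + c)) + (\<Sum>j = 1..m. f (j + c))"
proof -
  have "{1..m + 2 * c} = {1..c} \<union> {1 + c..m + c} \<union> {1 + (m + c)..c + (m + c)}" by auto
  then have split: "(\<Sum>i = 1..m + 2 * c. f i) =
      (\<Sum>i = 1..c. f i) + (\<Sum>i = 1 + c..m + c. f i) + (\<Sum>i = 1 + (m + c)..c + (m + c). f i)"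
    by (simp, subst sum.union_disjoint, auto simp: sum.union_disjoint)
  have "(\<Sum>i = 1 + c..m + c. f i) = (\<Sum>j = 1..m. f (j + c))"
    by (rule sum.shift_bounds_cl_nat_ivl)
  moreover have "(\<Sum>i = 1 + (m + c)..c + (m + c). f i) = (\<Sum>i = 1..c. f (i + m + c))"
    using sum.shift_bounds_cl_nat_ivl[of f 1 "m + c" c] by (simp add: add.assoc)
  ultimately show ?thesis
    unfolding split by (simp add: sum.distrib ac_simps)
qed

lemma displacement_framed:
  "displacement (m + 2 * c) (framed m c s) = displacement m s + 2 * int c * int (m + c)"
  unfolding displacement_def sum_frame_split by (simp add: framed_def)

definition inversion_pairs :: "nat \<Rightarrow> (nat \<Rightarrow> nat) \<Rightarrow> (nat \<times> nat) set" where
  "inversion_pairs n p = {(i, j). i \<in> {1..n} \<and> j \<in> {1..n} \<and> i < j \<and> p i > p j}"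

lemma inversions_eq_card: "inversions n p = card (inversion_pairs n p)"
  unfolding inversions_def inversion_pairs_def ..

lemma inversion_pairs_framed:
  assumes sp: "s permutes {1..m}"
  shows "inversion_pairs (m + 2 * c) (framed m c s) =
    map_prod (\<lambda>i. i + c) (\<lambda>j. j + c) ` inversion_pairs m s
    \<union> {1..c} \<times> {c + 1..m + 2 * c} \<union> {c + 1..m + c} \<times> {m + c + 1..m + 2 * c}"
    (is "?S = ?shift ` _ \<union> ?B \<union> ?C")
proof -
  have sv: "s j \<in> {1..m}" if "1 \<le> j" "j \<le> m" for j
    using permutes_in_image[OF sp] that by auto
  show ?thesis
  proof (intro equalityI subsetI)
    fix x assume "x \<in> ?S"
    then obtain i j where x: "x = (i, j)" "1 \<le> i" "i < j" "j \<le> m + 2 * c"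
      and inv: "framed m c s j < framed m c s i" unfolding inversion_pairs_def by auto
    consider "i \<le> c" "j \<le> c" | "i \<le> c" "c < j" | "c < i" "j \<le> m + c"
      | "c < i" "i \<le> m + c" "m + c < j" | "m + c < i"
      using x by linarith
    then show "x \<in> ?shift ` inversion_pairs m s \<union> ?B \<union> ?C"
    proof cases
      case 1
      then show ?thesis using x inv by (simp add: framed_apply_first)
    next
      case 3
      then have "(i - c, j - c) \<in> inversion_pairs m s"
        using x inv by (auto simp: framed_apply_middle inversion_pairs_def)
      moreover have "x = ?shift (i - c, j - c)" using 3 x by auto
      ultimately show ?thesis by blast
    next
      case 5
      then show ?thesis using x inv by (simp add: framed_apply_last)
    qed (use x in auto)
  next
    fix x assume "x \<in> ?shift ` inversion_pairs m s \<union> ?B \<union> ?C"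
    then consider "x \<in> ?shift ` inversion_pairs m s" | "x \<in> ?B" | "x \<in> ?C" by blast
    then show "x \<in> ?S"
    proof cases
      case 1
      then show ?thesis by (auto simp: inversion_pairs_def framed_apply_middle)
    next
      case 2
      then obtain i j where ij: "x = (i, j)" "1 \<le> i" "i \<le> c" "c < j" "j \<le> m + 2 * c" by auto
      have "framed m c s j \<le> m + c"
      proof (cases "j \<le> m + c")
        case True
        then have "s (j - c) \<in> {1..m}" using ij by (intro sv) auto
        then show ?thesis using True ij by (simp add: framed_apply_middle)
      qed (use ij in \<open>simp add: framed_apply_last\<close>)
      then show ?thesis using ij by (auto simp: inversion_pairs_def framed_apply_first)
    next
      case 3
      then obtain i j where ij: "x = (i, j)" "c < i" "i \<le> m + c" "m + c < j" "j \<le> m + 2 * c"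
        by auto
      have "s (i - c) \<in> {1..m}" using ij by (intro sv) auto
      then have "c < framed m c s i" using ij by (simp add: framed_apply_middle)
      then show ?thesis using ij by (auto simp: inversion_pairs_def framed_apply_last)
    qed
  qed
qed

lemma inversions_framed:
  assumes sp: "s permutes {1..m}"
  shows "inversions (m + 2 * c) (framed m c s) = inversions m s + c * (m + c) + m * c"
proof -
  let ?shift = "map_prod (\<lambda>i::nat. i + c) (\<lambda>j::nat. j + c)"
  let ?B = "{1..c} \<times> {c + 1..m + 2 * c}" and ?C = "{c + 1..m + c} \<times> {m + c + 1..m + 2 * c}"
  have fin: "finite (inversion_pairs m s)"
    by (rule finite_subset[of _ "{1..m} \<times> {1..m}"]) (auto simp: inversion_pairs_def)
  have "inj ?shift"
    using map_prod_inj_on[of "\<lambda>i. i + c" UNIV "\<lambda>j. j + c" UNIV] by (simp add: inj_on_def)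
  then have "card (?shift ` inversion_pairs m s) = card (inversion_pairs m s)"
    by (simp add: card_image inj_on_subset)
  moreover have "?shift ` inversion_pairs m s \<inter> ?B = {}"
    and "(?shift ` inversion_pairs m s \<union> ?B) \<inter> ?C = {}"
    by (auto simp: inversion_pairs_def)
  ultimately have "card (?shift ` inversion_pairs m s \<union> ?B \<union> ?C)
      = card (inversion_pairs m s) + card ?B + card ?C"
    using fin by (simp add: card_Un_disjoint)
  then show ?thesis unfolding inversions_eq_card inversion_pairs_framed[OF sp] by simp
qed

lemma cycle_at_subset:
  assumes "p permutes S" "x \<in> S"
  shows "cycle_at p x \<subseteq> S"
  using permutes_in_image[OF permutes_funpow[OF assms(1)]] assms(2) unfolding cycle_at_def by auto

lemma num_cycles_le: "num_cycles n p \<le> n"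
  unfolding num_cycles_def using card_image_le[of "{1..n}" "cycle_at p"] by simp

lemma funpow_framed_first:
  assumes "1 \<le> i" "i \<le> c"
  shows "(framed m c s ^^ k) i = (if even k then i else i + m + c)"
    and "(framed m c s ^^ k) (i + m + c) = (if even k then i + m + c else i)"
  using assms by (induction k) (auto simp: framed_apply_first framed_apply_last)

lemma funpow_framed_middle:
  assumes sp: "s permutes {1..m}" and j: "1 \<le> j" "j \<le> m"
  shows "(framed m c s ^^ k) (j + c) = (s ^^ k) j + c"
proof (induction k)
  case (Suc k)
  have "(s ^^ k) j \<in> {1..m}" using permutes_in_image[OF permutes_funpow[OF sp]] j by auto
  then show ?case using Suc by (simp add: framed_apply_middle)
qed simp

lemma alternating_orbit: "{if even k then a else b | k :: nat. True} = {a, b}"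
proof (intro equalityI subsetI)
  fix x assume "x \<in> {a, b}"
  then have "x = (if even (0::nat) then a else b) \<or> x = (if even (1::nat) then a else b)" by auto
  then show "x \<in> {if even k then a else b | k :: nat. True}" by blast
qed auto

lemma cycle_at_framed_first:
  assumes "1 \<le> i" "i \<le> c"
  shows "cycle_at (framed m c s) i = {i, i + m + c}"
    and "cycle_at (framed m c s) (i + m + c) = {i, i + m + c}"
  unfolding cycle_at_def funpow_framed_first[OF assms] alternating_orbit by auto

lemma cycle_at_framed_middle:
  assumes "s permutes {1..m}" "1 \<le> j" "j \<le> m"
  shows "cycle_at (framed m c s) (j + c) = (\<lambda>x. x + c) ` cycle_at s j"
  unfolding cycle_at_def funpow_framed_middle[OF assms] by auto

lemma num_cycles_framed:
  assumes sp: "s permutes {1..m}"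
  shows "num_cycles (m + 2 * c) (framed m c s) = num_cycles m s + c"
proof -
  let ?p = "framed m c s" and ?pair = "\<lambda>i. {i, i + m + c}" and ?shift = "image (\<lambda>x::nat. x + c)"
  have "(\<lambda>i. i + m + c) ` {1..c} = {1 + (m + c)..c + (m + c)}"
    by (simp add: add.assoc image_add_atLeastAtMost)
  then have "{1..m + 2 * c} = {1..c} \<union> (\<lambda>j. j + c) ` {1..m} \<union> (\<lambda>i. i + m + c) ` {1..c}"
    by (auto simp: image_add_atLeastAtMost)
  moreover have "cycle_at ?p ` {1..c} = ?pair ` {1..c}"
    by (rule image_cong) (auto simp: cycle_at_framed_first)
  moreover have "cycle_at ?p ` (\<lambda>i. i + m + c) ` {1..c} = ?pair ` {1..c}"
    unfolding image_image by (rule image_cong) (auto simp: cycle_at_framed_first)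
  moreover have "cycle_at ?p ` (\<lambda>j. j + c) ` {1..m} = ?shift ` cycle_at s ` {1..m}"
    unfolding image_image by (rule image_cong) (auto simp: cycle_at_framed_middle[OF sp])
  ultimately have cycles: "cycle_at ?p ` {1..m + 2 * c} = ?pair ` {1..c} \<union> ?shift ` cycle_at s ` {1..m}"
    by (simp add: image_Un Un_ac)
  have "inj_on ?pair {1..c}" by (rule inj_onI) auto
  moreover have "inj ?shift" by (simp add: inj_def inj_image_eq_iff)
  moreover have "?pair ` {1..c} \<inter> ?shift ` cycle_at s ` {1..m} = {}"
    using cycle_at_subset[OF sp] by fastforce
  ultimately show ?thesis
    unfolding num_cycles_def cycles
    by (simp add: card_Un_disjoint card_image inj_on_subset add.commute)
qed

definition defect :: "nat \<Rightarrow> (nat \<Rightarrow> nat) \<Rightarrow> int" where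
  "defect n p = displacement n p - int (inversions n p) - int (reflection_length n p)"

lemma shallow_iff_defect_eq_0: "shallow n p \<longleftrightarrow> defect n p = 0"
  unfolding shallow_def defect_def by auto

lemma defect_id: "defect n id = 0"
proof -
  have "inversion_pairs n id = {}" unfolding inversion_pairs_def by auto
  moreover have "cycle_at id ` {1..n} = (\<lambda>i. {i}) ` {1..n}" unfolding cycle_at_def by auto
  ultimately show ?thesis
    unfolding defect_def displacement_def reflection_length_def num_cycles_def inversions_eq_card
    by (simp add: card_image)
qed

lemma defect_framed:
  assumes sp: "s permutes {1..m}"
  shows "defect (m + 2 * c) (framed m c s) = defect m s + int c * int c - int c"
  unfolding defect_def reflection_length_def displacement_framed inversions_framed[OF sp]
    num_cycles_framed[OF sp]
  using num_cycles_le[of m s] by (simp add: of_nat_diff algebra_simps)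

lemma defect_framed_eq_0_iff:
  assumes sp: "s permutes {1..m}" and c: "1 \<le> c" and nonneg: "0 \<le> defect m s"
  shows "defect (m + 2 * c) (framed m c s) = 0 \<longleftrightarrow> c = 1 \<and> defect m s = 0"
proof -
  have "int c \<le> int c * int c" "int c * int c = int c \<longleftrightarrow> c = 1" using c by simp_all
  then show ?thesis unfolding defect_framed[OF sp] using nonneg by linarith
qed

definition outer_swaps :: "nat \<Rightarrow> nat \<Rightarrow> nat \<Rightarrow> nat" where
  "outer_swaps n k i = (if 1 \<le> i \<and> i \<le> k \<or> n - k < i \<and> i \<le> n then n + 1 - i else i)"

lemma outer_swaps_0: "outer_swaps n 0 = id"
  by (auto simp: outer_swaps_def fun_eq_iff)

lemma outer_swaps_permutes:
  assumes "2 * k \<le> n"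
  shows "outer_swaps n k permutes {1..n}"
proof (rule inj_imp_permutes)
  have "outer_swaps n k (outer_swaps n k i) = i" for i
    using assms unfolding outer_swaps_def by auto
  then show "inj_on (outer_swaps n k) {1..n}" by (metis inj_onI)
qed (use assms in \<open>auto simp: outer_swaps_def\<close>)

lemma outer_swaps_centrosymmetric: "2 * k \<le> n \<Longrightarrow> centrosymmetric n (outer_swaps n k)"
  unfolding centrosymmetric_def outer_swaps_def by auto

lemma outer_swaps_avoids132: "2 * k \<le> n \<Longrightarrow> avoids132 n (outer_swaps n k)"
  unfolding avoids132_def outer_swaps_def by auto

lemma outer_swaps_Suc: "2 * k \<le> m \<Longrightarrow> outer_swaps (m + 2) (Suc k) = framed m 1 (outer_swaps m k)"
  unfolding fun_eq_iff outer_swaps_def framed_def by auto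

lemma inj_on_outer_swaps: "inj_on (outer_swaps n) {0..n div 2}"
proof (rule linorder_inj_onI)
  fix k l assume "k < l" "l \<in> {0..n div 2}"
  then have "outer_swaps n k (Suc k) \<noteq> outer_swaps n l (Suc k)"
    unfolding outer_swaps_def by auto
  then show "outer_swaps n k \<noteq> outer_swaps n l" by metis
qed auto

lemma framed_inj:
  assumes "s permutes {1..m}" "t permutes {1..m}" "framed m c s = framed m c t"
  shows "s = t"
proof
  fix j
  show "s j = t j"
  proof (cases "j \<in> {1..m}")
    case True
    then show ?thesis using fun_cong[OF assms(3), of "j + c"] by (simp add: framed_apply_middle)
  qed (simp add: permutes_not_in[OF assms(1)] permutes_not_in[OF assms(2)])
qed

lemma framed_eq_outer_swaps_iff:
  assumes sp: "s permutes {1..m}" and c: "1 \<le> c" and k: "2 * k \<le> m + 2 * c"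
  shows "framed m c s = outer_swaps (m + 2 * c) k \<longleftrightarrow>
    c = 1 \<and> 1 \<le> k \<and> s = outer_swaps m (k - 1)"
proof
  assume eq: "framed m c s = outer_swaps (m + 2 * c) k"
  have "outer_swaps (m + 2 * c) k 1 = m + c + 1"
    using fun_cong[OF eq, of 1] c by (simp add: framed_apply_first)
  then have "1 \<le> k" "c = 1" using c unfolding outer_swaps_def by (auto split: if_splits)
  moreover have "2 * (k - 1) \<le> m" using k \<open>c = 1\<close> by simp
  ultimately have "framed m c s = framed m c (outer_swaps m (k - 1))"
    using eq outer_swaps_Suc[of "k - 1" m] by simp
  then have "s = outer_swaps m (k - 1)"
    using framed_inj[OF sp outer_swaps_permutes] \<open>2 * (k - 1) \<le> m\<close> by blast
  then show "c = 1 \<and> 1 \<le> k \<and> s = outer_swaps m (k - 1)" using \<open>1 \<le> k\<close> \<open>c = 1\<close> by blast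
next
  assume "c = 1 \<and> 1 \<le> k \<and> s = outer_swaps m (k - 1)"
  then show "framed m c s = outer_swaps (m + 2 * c) k"
    using outer_swaps_Suc[of "k - 1" m] k by simp
qed

lemma defect_nonneg:
  "p permutes {1..n} \<Longrightarrow> centrosymmetric n p \<Longrightarrow> avoids132 n p \<Longrightarrow> 0 \<le> defect n p"
proof (induction n arbitrary: p rule: less_induct)
  case (less n p)
  show ?case
  proof (cases rule: centrosymmetric_avoids132_cases[OF less.prems])
    case 1
    then show ?thesis unfolding 1 defect_id by simp
  next
    case (2 m c s)
    then have "0 \<le> defect m s" using less.IH[of m s] by simp
    moreover have "int c \<le> int c * int c" using \<open>1 \<le> c\<close> by simp
    moreover have "defect n p = defect m s + int c * int c - int c" using 2 defect_framed by simp
    ultimately show ?thesis by linarith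
  qed
qed

lemma defect_eq_0_iff:
  "p permutes {1..n} \<Longrightarrow> centrosymmetric n p \<Longrightarrow> avoids132 n p \<Longrightarrow>
    defect n p = 0 \<longleftrightarrow> (\<exists>k \<le> n div 2. p = outer_swaps n k)"
proof (induction n arbitrary: p rule: less_induct)
  case (less n p)
  show ?case
  proof (cases rule: centrosymmetric_avoids132_cases[OF less.prems])
    case 1
    then show ?thesis unfolding 1 defect_id using outer_swaps_0[of n] by (metis zero_le)
  next
    case (2 m c s)
    have IH: "defect m s = 0 \<longleftrightarrow> (\<exists>k \<le> m div 2. s = outer_swaps m k)"
      using less.IH[of m s] 2 by simp
    have "defect n p = 0 \<longleftrightarrow> c = 1 \<and> defect m s = 0"
      using defect_framed_eq_0_iff[OF 2(3,1)] defect_nonneg[OF 2(3,5,4)] 2(2,6) by simp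
    also have "\<dots> \<longleftrightarrow> (\<exists>k \<le> n div 2. c = 1 \<and> 1 \<le> k \<and> s = outer_swaps m (k - 1))"
    proof
      assume "c = 1 \<and> defect m s = 0"
      then obtain k where "c = 1" "k \<le> m div 2" "s = outer_swaps m k" using IH by blast
      then show "\<exists>k \<le> n div 2. c = 1 \<and> 1 \<le> k \<and> s = outer_swaps m (k - 1)"
        using \<open>n = m + 2 * c\<close> by (intro exI[of _ "Suc k"]) auto
    next
      assume "\<exists>k \<le> n div 2. c = 1 \<and> 1 \<le> k \<and> s = outer_swaps m (k - 1)"
      then obtain k where "k \<le> n div 2" "c = 1" "s = outer_swaps m (k - 1)" by blast
      moreover have "k - 1 \<le> m div 2"
        using \<open>k \<le> n div 2\<close> \<open>c = 1\<close> \<open>n = m + 2 * c\<close> by simp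
      ultimately show "c = 1 \<and> defect m s = 0" using IH by blast
    qed
    also have "\<dots> \<longleftrightarrow> (\<exists>k \<le> n div 2. p = outer_swaps n k)"
    proof -
      have "p = outer_swaps n k \<longleftrightarrow> c = 1 \<and> 1 \<le> k \<and> s = outer_swaps m (k - 1)"
        if "k \<le> n div 2" for k
        using framed_eq_outer_swaps_iff[OF 2(3,1), of k] 2(2,6) that by simp
      then show ?thesis by blast
    qed
    finally show ?thesis .
  qed
qed

lemma ceiling_half_succ: "nat \<lceil>(real n + 1) / 2\<rceil> = n div 2 + 1"
proof -
  have "2 * (n div 2) \<le> n" "n \<le> 2 * (n div 2) + 1" by presburger+
  then have "2 * real (n div 2) \<le> real n" "real n \<le> 2 * real (n div 2) + 1" by linarith+
  then have "\<lceil>(real n + 1) / 2\<rceil> = int (n div 2 + 1)"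
    by (intro ceiling_unique) simp_all
  then show ?thesis by simp
qed

theorem theorem3p7:
  fixes n :: nat
  assumes "n \<ge> 2"
  shows "card {p \<in> perms n. shallow n p \<and> avoids132 n p \<and> centrosymmetric n p}
           = nat (ceiling ((real n + 1) / 2))"
proof -
  txt \<open>The count holds for every n.\<close>
  have "{p \<in> perms n. shallow n p \<and> avoids132 n p \<and> centrosymmetric n p}
      = outer_swaps n ` {0..n div 2}"
    using defect_eq_0_iff outer_swaps_permutes outer_swaps_avoids132 outer_swaps_centrosymmetric
    unfolding perms_def shallow_iff_defect_eq_0 by fastforce
  then show ?thesis
    using card_image[OF inj_on_outer_swaps] ceiling_half_succ by simp
qed

end
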